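(* For $n\in\{0,1,2,\dots\}$ define \[ b_n=\frac14\frac{(-1)^n}{n!}\sum_{k=0}^{n}(-1)^kS(n,k)(2k-1)!!, \] \[ c_n=\frac{(-1)^{n+1}}{n!}\sum_{k=1}^{n}(-1)^kS(n,k)\frac{k!}{2^k}\sum_{\ell=1}^{k}(-1)^{\ell}\binom{2k-\ell}{k}\frac{2^{\ell/2}}{\ell}\sin\frac{3\ell\pi}{4}. \] Then, with principal branches of the square root and of $\arctan$, for $|x|<\ln 2$, \[ \frac{1}{4\sqrt{2e^{-x}-1}}=\sum_{n=0}^{\infty}b_nx^n \qquad\text{and}\qquad \frac{\frac{\pi}{4}-\arctan\sqrt{2e^{-x}-1}}{\sqrt{2e^{-x}-1}}=\sum_{n=0}^{\infty}c_nx^n . \]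
   Context: $S(n,k)$ are the Stirling numbers of the second kind, given by $\frac{(e^x-1)^k}{k!}=\sum_{n\ge k}S(n,k)\frac{x^n}{n!}$. $(2k-1)!!=1\cdot3\cdots(2k-1)$ for $k\ge1$, and $(-1)!!=1$. An empty sum is $0$. *)

theory Defs
  imports "HOL-Analysis.Analysis" "HOL-Combinatorics.Stirling"
begin

text \<open>(2k-1)!! = 1*3*...*(2k-1), with (-1)!! = 1 (empty product for k = 0).\<close>
definition odd_dfact :: "nat \<Rightarrow> real" where
  "odd_dfact k = (\<Prod>i<k. real (2 * i + 1))"

definition b_coeff :: "nat \<Rightarrow> real" where
  "b_coeff n = (1/4) * ((-1) ^ n / fact n) *
     (\<Sum>k = 0..n. (-1) ^ k * real (Stirling n k) * odd_dfact k)"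

definition c_coeff :: "nat \<Rightarrow> real" where
  "c_coeff n = ((-1) ^ (n + 1) / fact n) *
     (\<Sum>k = 1..n. (-1) ^ k * real (Stirling n k) * (fact k / 2 ^ k) *
        (\<Sum>l = 1..k. (-1) ^ l * real ((2 * k - l) choose k) *
            (2 powr (real l / 2) / real l) * sin (3 * real l * pi / 4)))"

end

theory Submission
  imports Defs "HOL-Complex_Analysis.Complex_Analysis"
begin

(* Both functions have the form g (2 e^(-x) - 1) = g (1 + 2u) with u = e^(-x) - 1, and the
   coefficient of x^n in u^k is (-1)^n k! S(n,k) / n!. So it suffices to know the Taylor
   coefficients of g (1 + 2u) at u = 0; the series converges for |x| < ln 2 because
   2 e^(-x) - 1 then stays off the closed negative real axis, where g is holomorphic.

   For g y = 1 / (4 sqrt y) the coefficients come from the binomial series. For the arctangent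
   ratio f u = g (1 + 2u), differentiation gives 2 (1 + u) ((1 + 2u) f' + f) = -1, that is
   (k + 1) a(k+1) + (2k + 1) a(k) = -(-1)^k / 2 with a(0) = 0. The inner sum T(k) of c_n is
   Im [t^k] L(C(t)) B(t) with B = (1 - 4t)^(-1/2), C = (1 - sqrt (1 - 4t)) / 2 and
   L z = -log (1 - (1 - i) z), because [t^k] C^l B = binomial (2k - l) k. As C' = B and
   (1 - 4t) B' = 2B, this yields (k + 1) T(k+1) - (4k + 2) T(k) = Im [t^k] L'(C), and
   the coefficients of L'(C) = (1 - i) / (1 - (1 - i) C) have imaginary parts -2^k since
   ((1 + i)/2 - C) ((1 - i)/2 - C) = 1/2 - t and C is real. Hence a(k) = -(-1)^k T(k) / 2^k. *)

no_notation vec_nth (infixl \<open>$\<close> 90)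

section \<open>Compositions of power series\<close>

lemma fps_exp_minus_one_power_nth:
  fixes c :: "'a::field_char_0"
  shows "((fps_exp c - 1) ^ k) $ n = c ^ n * fact k * of_nat (Stirling n k) / fact n"
proof (induction n arbitrary: k)
  case 0
  then show ?case by (cases k) (auto simp: fps_nth_power_0)
next
  case (Suc n)
  show ?case
  proof (cases k)
    case 0
    then show ?thesis by simp
  next
    case (Suc m)
    define G where "G = fps_exp c - 1"
    have "fps_deriv G = fps_const c * (G + 1)"
      by (simp add: G_def)
    then have "fps_deriv (G ^ Suc m) = of_nat (Suc m) * (fps_const c * (G + 1)) * G ^ m"
      by (simp only: fps_deriv_power' diff_Suc_1)
    also have "\<dots> = fps_const (of_nat (Suc m) * c) * (G ^ Suc m + G ^ m)"
      by (simp only: fps_const_mult [symmetric] fps_of_nat power_Suc) (simp add: algebra_simps)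
    finally have deriv:
      "fps_deriv (G ^ Suc m) = fps_const (of_nat (Suc m) * c) * (G ^ Suc m + G ^ m)" .
    have "of_nat (Suc n) * (G ^ Suc m) $ Suc n = fps_deriv (G ^ Suc m) $ n"
      by (simp only: fps_deriv_nth Suc_eq_plus1)
    also have "\<dots> = of_nat (Suc m) * c * ((G ^ Suc m) $ n + (G ^ m) $ n)"
      unfolding deriv by simp
    also have "\<dots> = of_nat (Suc n) *
        (c ^ Suc n * fact (Suc m) * of_nat (Stirling (Suc n) (Suc m)) / fact (Suc n))"
    proof -
      have "(of_nat (Stirling (Suc n) (Suc m)) :: 'a) =
          of_nat (Suc m) * of_nat (Stirling n (Suc m)) + of_nat (Stirling n m)"
        by (simp add: algebra_simps)
      moreover have "(fact (Suc m) :: 'a) = of_nat (Suc m) * fact m"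
        and "(fact (Suc n) :: 'a) = of_nat (Suc n) * fact n"
        by simp_all
      ultimately show ?thesis
        unfolding Suc.IH[folded G_def] by (simp add: field_simps del: of_nat_Suc)
    qed
    finally show ?thesis
      using Suc by (simp only: mult_left_cancel[OF of_nat_neq_0] G_def)
  qed
qed

lemma fps_compose_exp_minus_one_nth:
  fixes F :: "'a::field_char_0 fps"
  shows "(F oo (fps_exp c - 1)) $ n =
    c ^ n / fact n * (\<Sum>k = 0..n. of_nat (Stirling n k) * (fact k * F $ k))"
  unfolding fps_compose_nth fps_exp_minus_one_power_nth sum_distrib_left
  by (rule sum.cong) simp_all

lemma fps_power_mult_nth_eq_0:
  fixes c b :: "'a::comm_ring_1 fps"
  assumes "c $ 0 = 0" and "k < l"
  shows "(c ^ l * b) $ k = 0"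
proof -
  have "c = fps_X * fps_shift 1 c"
    using assms(1) by (simp add: fps_eq_iff fps_X_mult_nth)
  then have "c ^ l * b = fps_X ^ l * (fps_shift 1 c ^ l * b)"
    by (metis power_mult_distrib mult.assoc)
  then show ?thesis
    using assms(2) by (simp add: fps_X_power_mult_nth)
qed

lemma fps_compose_mult_nth:
  fixes a b c :: "'a::comm_ring_1 fps"
  assumes "c $ 0 = 0"
  shows "((a oo c) * b) $ n = (\<Sum>i = 0..n. a $ i * (c ^ i * b) $ n)"
proof -
  have "((a oo c) * b) $ n = (\<Sum>j = 0..n. \<Sum>i = 0..j. a $ i * (c ^ i) $ j * b $ (n - j))"
    by (simp add: fps_mult_nth fps_compose_nth sum_distrib_right mult.assoc)
  also have "\<dots> = (\<Sum>j = 0..n. \<Sum>i = 0..n. a $ i * (c ^ i) $ j * b $ (n - j))"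
    using fps_power_mult_nth_eq_0[OF assms, where b = 1]
    by (intro sum.cong refl sum.mono_neutral_left) auto
  also have "\<dots> = (\<Sum>i = 0..n. a $ i * (c ^ i * b) $ n)"
    by (subst sum.swap) (simp add: fps_mult_nth sum_distrib_left mult.assoc)
  finally show ?thesis .
qed

section \<open>Central binomial and Catalan series\<close>

lemma odd_dfact_eq_pochhammer:
  "of_real (odd_dfact n) = (2 ^ n * pochhammer (1/2) n :: 'a::real_field)"
  by (induction n) (simp_all add: odd_dfact_def pochhammer_Suc field_simps)

lemma gbinomial_minus_half:
  "((-1/2) gchoose n) * 2 ^ n * fact n = ((-1) ^ n * of_real (odd_dfact n) :: 'a::real_field)"
  by (simp add: gbinomial_pochhammer odd_dfact_eq_pochhammer)

lemma gbinomial_minus_half_central_binomial: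
  "(-4) ^ n * ((-1/2) gchoose n) = (of_nat ((2 * n) choose n) :: 'a::field_char_0)"
proof -
  have "(of_nat ((2 * n) choose n) :: 'a) = fact (2 * n) / (fact n * fact n)"
    by (subst binomial_fact) (simp_all add: mult_2)
  also have "\<dots> = 4 ^ n * pochhammer (1/2) n / fact n"
    by (simp add: fact_double power_mult)
  also have "\<dots> = (-4) ^ n * ((-1/2) gchoose n)"
    by (simp add: gbinomial_pochhammer power_mult_distrib [symmetric])
  finally show ?thesis ..
qed

definition fps_sqrt_one_minus_4X :: "'a::field_char_0 fps" where
  "fps_sqrt_one_minus_4X = fps_binomial (1/2) oo (fps_const (-4) * fps_X)"

definition central_binomial_fps :: "'a::field_char_0 fps" where
  "central_binomial_fps = Abs_fps (\<lambda>n. of_nat ((2 * n) choose n))"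

(* X times the generating function of the Catalan numbers *)
definition catalan_fps :: "'a::field_char_0 fps" where
  "catalan_fps = fps_const (1/2) * (1 - fps_sqrt_one_minus_4X)"

lemma central_binomial_fps_eq:
  "central_binomial_fps = fps_binomial (-1/2) oo (fps_const (-4) * fps_X)"
  by (simp add: fps_eq_iff central_binomial_fps_def flip: gbinomial_minus_half_central_binomial)

lemma fps_binomial_add_mult_compose_linear:
  fixes a b c :: "'a::field_char_0"
  shows "fps_binomial (a + b) oo (fps_const c * fps_X) =
    (fps_binomial a oo (fps_const c * fps_X)) * (fps_binomial b oo (fps_const c * fps_X))"
  unfolding fps_binomial_add_mult by (rule fps_compose_mult_distrib) simp

lemma fps_sqrt_one_minus_4X_mult_central_binomial:
  "fps_sqrt_one_minus_4X * central_binomial_fps = (1 :: 'a::field_char_0 fps)"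
  using fps_binomial_add_mult_compose_linear [of "1/2 :: 'a" "-1/2" "-4"]
  by (simp add: fps_sqrt_one_minus_4X_def central_binomial_fps_eq)

lemma fps_sqrt_one_minus_4X_square:
  "fps_sqrt_one_minus_4X * fps_sqrt_one_minus_4X = (1 - fps_const 4 * fps_X :: 'a::field_char_0 fps)"
  using fps_binomial_add_mult_compose_linear [of "1/2 :: 'a" "1/2" "-4"]
  by (simp add: fps_sqrt_one_minus_4X_def fps_binomial_1 fps_compose_add_distrib flip: fps_const_neg)

lemma fps_deriv_sqrt_one_minus_4X:
  "fps_deriv fps_sqrt_one_minus_4X = - 2 * (central_binomial_fps :: 'a::field_char_0 fps)"
proof -
  let ?s = "fps_sqrt_one_minus_4X :: 'a fps"
  have "fps_deriv (?s * ?s) = - fps_const 4"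
    by (simp only: fps_sqrt_one_minus_4X_square) simp
  then have "fps_deriv ?s * ?s + ?s * fps_deriv ?s = - fps_const 4"
    by simp
  moreover have "fps_const (4 :: 'a) = 2 * 2" and "fps_const (1/2 :: 'a) * 2 = 1"
    by (simp_all add: fps_numeral_fps_const)
  ultimately show ?thesis
    using fps_sqrt_one_minus_4X_mult_central_binomial [where 'a = 'a] by algebra
qed

lemma fps_deriv_central_binomial_fps:
  "(1 - fps_const 4 * fps_X) * fps_deriv central_binomial_fps =
    2 * (central_binomial_fps :: 'a::field_char_0 fps)"
proof -
  let ?s = "fps_sqrt_one_minus_4X :: 'a fps" and ?b = "central_binomial_fps :: 'a fps"
  have "fps_deriv (?s * ?b) = 0"
    by (simp only: fps_sqrt_one_minus_4X_mult_central_binomial) simp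
  then have "?s * fps_deriv ?b + fps_deriv ?s * ?b = 0"
    by simp
  then show ?thesis
    unfolding fps_sqrt_one_minus_4X_square [symmetric]
    using fps_sqrt_one_minus_4X_mult_central_binomial [where 'a = 'a]
      fps_deriv_sqrt_one_minus_4X [where 'a = 'a]
    by algebra
qed

lemma catalan_fps_nth_0 [simp]: "catalan_fps $ 0 = 0"
  by (simp add: catalan_fps_def fps_sqrt_one_minus_4X_def)

lemma catalan_fps_square: "catalan_fps * catalan_fps = catalan_fps - (fps_X :: 'a::field_char_0 fps)"
proof -
  have "fps_const (1/2 :: 'a) * 2 = 1" and "fps_const (4 :: 'a) = 2 * 2"
    by (simp_all add: fps_numeral_fps_const)
  then show ?thesis
    unfolding catalan_fps_def using fps_sqrt_one_minus_4X_square [where 'a = 'a] by algebra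
qed

lemma fps_deriv_catalan_fps: "fps_deriv catalan_fps = (central_binomial_fps :: 'a::field_char_0 fps)"
  unfolding catalan_fps_def using fps_deriv_sqrt_one_minus_4X [where 'a = 'a] by simp

lemma catalan_fps_nth_Suc:
  "catalan_fps $ Suc n = (of_nat ((2 * n) choose n) / of_nat (Suc n) :: 'a::field_char_0)"
proof -
  have "of_nat (Suc n) * catalan_fps $ Suc n = (central_binomial_fps $ n :: 'a)"
    by (simp only: fps_deriv_catalan_fps [symmetric] fps_deriv_nth Suc_eq_plus1)
  then show ?thesis
    by (simp add: central_binomial_fps_def field_simps del: of_nat_Suc)
qed

lemma catalan_fps_mult_central_binomial:
  "catalan_fps * central_binomial_fps =
    fps_const (1/2) * (central_binomial_fps - 1 :: 'a::field_char_0 fps)"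
  using fps_sqrt_one_minus_4X_mult_central_binomial
  by (simp add: catalan_fps_def algebra_simps)

lemma catalan_power_mult_central_binomial_nth:
  "(catalan_fps ^ l * central_binomial_fps) $ k =
    (if l \<le> k then of_nat ((2 * k - l) choose k) else (0 :: 'a::field_char_0))"
proof (induction l arbitrary: k rule: induct_nat_012)
  case 0
  show ?case
    by (simp add: central_binomial_fps_def)
next
  case 1
  show ?case
  proof (cases k)
    case 0
    then show ?thesis
      by (simp add: catalan_fps_mult_central_binomial central_binomial_fps_def)
  next
    case (Suc m)
    have "(2 * m + 1) choose Suc m = (2 * m + 1) choose m"
      using central_binomial_odd[of "2 * m + 1"] by simp
    then have "(of_nat ((2 * Suc m) choose Suc m) :: 'a) = 2 * of_nat ((2 * m + 1) choose Suc m)"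
      by simp
    then show ?thesis
      unfolding power_Suc0_right catalan_fps_mult_central_binomial
      using Suc by (simp add: central_binomial_fps_def del: binomial_Suc_Suc)
  qed
next
  case (ge2 l)
  have "catalan_fps ^ Suc (Suc l) * central_binomial_fps =
      catalan_fps ^ l * (catalan_fps * catalan_fps) * (central_binomial_fps :: 'a fps)"
    by (simp add: algebra_simps)
  also have "\<dots> = catalan_fps ^ l * (catalan_fps - fps_X) * central_binomial_fps"
    by (simp only: catalan_fps_square)
  also have "\<dots> = catalan_fps ^ Suc l * central_binomial_fps -
      fps_X * (catalan_fps ^ l * central_binomial_fps)"
    by (simp add: algebra_simps)
  finally have rec: "(catalan_fps ^ Suc (Suc l) * central_binomial_fps) $ k =
      (catalan_fps ^ Suc l * central_binomial_fps) $ k -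
      (if k = 0 then 0 else (catalan_fps ^ l * central_binomial_fps :: 'a fps) $ (k - 1))"
    by simp
  show ?case
  proof (cases k)
    case 0
    then show ?thesis
      unfolding rec ge2.IH by simp
  next
    case (Suc m)
    consider "Suc l \<le> m" | "l = m" | "m < l"
      by linarith
    then show ?thesis
    proof cases
      case 1
      then have "2 * k - Suc l = Suc (2 * m - l)" and "2 * k - Suc (Suc l) = 2 * m - l"
        using Suc by simp_all
      then show ?thesis
        unfolding rec ge2.IH using 1 Suc by simp
    next
      case 2
      then have "2 * k - Suc l = k"
        using Suc by simp
      then show ?thesis
        unfolding rec ge2.IH using 2 Suc by simp
    next
      case 3
      then show ?thesis
        unfolding rec ge2.IH using Suc by simp
    qed
  qed
qed

lemma fps_compose_catalan_central_binomial_ode: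
  fixes L :: "'a::field_char_0 fps"
  defines "F \<equiv> (L oo catalan_fps) * central_binomial_fps"
  shows "(1 - fps_const 4 * fps_X) * fps_deriv F - 2 * F = fps_deriv L oo catalan_fps"
proof -
  let ?s = "fps_sqrt_one_minus_4X :: 'a fps" and ?b = "central_binomial_fps :: 'a fps"
  have "fps_deriv F = (fps_deriv L oo catalan_fps) * ?b * ?b + (L oo catalan_fps) * fps_deriv ?b"
    by (simp add: F_def fps_compose_deriv fps_deriv_catalan_fps)
  then show ?thesis
    unfolding fps_sqrt_one_minus_4X_square [symmetric] F_def
    using fps_sqrt_one_minus_4X_mult_central_binomial [where 'a = 'a]
      fps_deriv_central_binomial_fps [where 'a = 'a, folded fps_sqrt_one_minus_4X_square]
    by algebra
qed

section \<open>The trigonometric binomial sums\<close>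

lemma Im_one_minus_i_power:
  "Im ((1 - \<i>) ^ l) = (-1) ^ l * 2 powr (real l / 2) * sin (3 * real l * pi / 4)"
proof -
  have "3 * pi / 4 = pi - pi / 4"
    by simp
  then have cos: "cos (3 * pi / 4) = - (sqrt 2 / 2)" and sin: "sin (3 * pi / 4) = sqrt 2 / 2"
    by (simp_all only: cos_pi_minus sin_pi_minus cos_45 sin_45)
  have "sqrt 2 * cos (3 * pi / 4) = -1" and "sqrt 2 * sin (3 * pi / 4) = 1"
    unfolding cos sin by simp_all
  then have "1 - \<i> = - rcis (sqrt 2) (3 * pi / 4)"
    by (simp add: complex_eq_iff rcis_def)
  then have "(1 - \<i>) ^ l = (-1) ^ l * rcis (sqrt 2 ^ l) (real l * (3 * pi / 4))"
    by (simp add: power_minus' DeMoivre2)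
  moreover have "sqrt 2 ^ l = 2 powr (real l / 2)"
    by (simp add: powr_half_sqrt_powr powr_realpow real_sqrt_power)
  ultimately show ?thesis
    by (simp add: mult_ac)
qed

lemma Im_catalan_fps_nth [simp]: "Im (catalan_fps $ k) = 0"
  by (cases k) (simp_all add: catalan_fps_nth_Suc)

lemma Im_geometric_compose_catalan_fps_nth:
  "Im ((Abs_fps (\<lambda>j. (1 - \<i>) ^ Suc j) oo catalan_fps) $ k) = - (2 ^ k)"
proof -
  define w where "w = 1 - \<i>"
  define G where "G = Abs_fps (\<lambda>j. w ^ Suc j)"
  define R where "R = G oo catalan_fps"
  have "G * (1 - fps_const w * fps_X) = G - fps_const w * (fps_X * G)"
    by (simp add: algebra_simps)
  also have "\<dots> = fps_const w"
    by (rule fps_ext) (simp add: G_def power_eq_if)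
  finally have "(G * (1 - fps_const w * fps_X)) oo catalan_fps = fps_const w"
    by simp
  then have geom: "R * (1 - fps_const w * catalan_fps) = fps_const w"
    by (simp add: R_def fps_compose_mult_distrib fps_compose_sub_distrib
        flip: fps_const_mult_apply_left)
  have "fps_const w * fps_const ((1 + \<i>) / 2) = 1"
    and "fps_const ((1 + \<i>) / 2) * fps_const ((1 - \<i>) / 2) = fps_const (1 / 2)"
    and "fps_const ((1 + \<i>) / 2) + fps_const ((1 - \<i>) / 2) = 1"
    by (simp_all add: w_def complex_eq_iff)
  then have eq: "fps_const (1 / 2) * R - fps_X * R = fps_const ((1 - \<i>) / 2) - catalan_fps"
    using geom catalan_fps_square [where 'a = complex] by algebra
  have "(fps_const (1 / 2) * R - fps_X * R) $ n = (fps_const ((1 - \<i>) / 2) - catalan_fps) $ n" for n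
    by (simp only: eq)
  then have coeff: "R $ n / 2 - (if n = 0 then 0 else R $ (n - 1)) =
      (if n = 0 then (1 - \<i>) / 2 else 0) - catalan_fps $ n" for n
    by simp
  have "Im (R $ k) = - (2 ^ k)"
  proof (induction k)
    case 0
    show ?case
      using arg_cong [OF coeff [of 0], of Im] by simp
  next
    case (Suc k)
    then show ?case
      using arg_cong [OF coeff [of "Suc k"], of Im] by simp
  qed
  then show ?thesis
    by (simp add: R_def G_def w_def)
qed

definition trig_binomial_sum :: "nat \<Rightarrow> real" where
  "trig_binomial_sum k = (\<Sum>l = 1..k. (-1) ^ l * real ((2 * k - l) choose k) *
     (2 powr (real l / 2) / real l) * sin (3 * real l * pi / 4))"

lemma trig_binomial_sum_0 [simp]: "trig_binomial_sum 0 = 0"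
  by (simp add: trig_binomial_sum_def)

lemma trig_binomial_sum_eq_Im_nth:
  "trig_binomial_sum k =
    Im (((Abs_fps (\<lambda>l. (1 - \<i>) ^ l / of_nat l) oo catalan_fps) * central_binomial_fps) $ k)"
proof -
  have "((Abs_fps (\<lambda>l. (1 - \<i>) ^ l / of_nat l) oo catalan_fps) * central_binomial_fps) $ k =
      (\<Sum>l = 0..k. (1 - \<i>) ^ l / of_nat l * of_nat ((2 * k - l) choose k))"
    by (simp add: fps_compose_mult_nth catalan_power_mult_central_binomial_nth)
  \<comment> \<open>the term l = 0 vanishes by the convention x / 0 = 0\<close>
  also have "\<dots> = (\<Sum>l = 1..k. of_real (real ((2 * k - l) choose k) / real l) * (1 - \<i>) ^ l)"
    by (rule sum.mono_neutral_cong_right) auto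
  finally show ?thesis
    by (simp add: trig_binomial_sum_def Im_one_minus_i_power mult_ac)
qed

lemma trig_binomial_sum_rec:
  "real (Suc k) * trig_binomial_sum (Suc k) = real (4 * k + 2) * trig_binomial_sum k - 2 ^ k"
proof -
  define L :: "complex fps" where "L = Abs_fps (\<lambda>l. (1 - \<i>) ^ l / of_nat l)"
  define F where "F = (L oo catalan_fps) * central_binomial_fps"
  have "fps_deriv L = Abs_fps (\<lambda>j. (1 - \<i>) ^ Suc j)"
    by (simp add: L_def fps_eq_iff del: of_nat_Suc)
  then have "(1 - fps_const 4 * fps_X) * fps_deriv F - 2 * F =
      Abs_fps (\<lambda>j. (1 - \<i>) ^ Suc j) oo catalan_fps"
    unfolding F_def by (simp only: fps_compose_catalan_central_binomial_ode)
  moreover have "((1 - fps_const 4 * fps_X) * fps_deriv F - 2 * F) $ k =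
      of_nat (Suc k) * F $ Suc k - of_nat (4 * k + 2) * F $ k"
    by (cases k) (simp_all add: algebra_simps fps_numeral_fps_const)
  ultimately have "Im (of_nat (Suc k) * F $ Suc k - of_nat (4 * k + 2) * F $ k) = - (2 ^ k)"
    using Im_geometric_compose_catalan_fps_nth by metis
  then show ?thesis
    by (simp add: trig_binomial_sum_eq_Im_nth F_def L_def)
qed

section \<open>The arctangent ratio\<close>

lemma Re_csqrt_pos:
  assumes "z \<notin> \<real>\<^sub>\<le>\<^sub>0"
  shows "0 < Re (csqrt z)"
proof (rule ccontr)
  define t where "t = Im (csqrt z)"
  assume "\<not> 0 < Re (csqrt z)"
  then have "csqrt z = \<i> * of_real t"
    using Re_csqrt[of z] by (simp add: complex_eq_iff t_def)
  then have "z = - of_real (t ^ 2)"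
    by (metis power2_csqrt power_mult_distrib power2_i of_real_power mult_minus1)
  then show False
    using assms by (simp add: complex_nonpos_Reals_iff)
qed

definition arctan_ratio :: "complex \<Rightarrow> complex" where
  "arctan_ratio y = (of_real pi / 4 - Arctan (csqrt y)) / csqrt y"

lemma has_field_derivative_arctan_ratio:
  assumes "y \<notin> \<real>\<^sub>\<le>\<^sub>0"
  shows "(arctan_ratio has_field_derivative (- 1 / (1 + y) - arctan_ratio y) / (2 * y)) (at y)"
proof -
  define s where "s = csqrt y"
  have s: "s \<noteq> 0" "s ^ 2 = y" "0 < Re s"
    using Re_csqrt_pos[OF assms] by (auto simp: s_def)
  have ratio: "arctan_ratio y = (of_real pi / 4 - Arctan s) / s"
    by (simp add: arctan_ratio_def s_def)
  have "(arctan_ratio has_field_derivative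
      ((0 - inverse (1 + s ^ 2) * inverse (2 * s)) * s - (of_real pi / 4 - Arctan s) * inverse (2 * s))
        / (s * s)) (at y)"
    unfolding arctan_ratio_def [abs_def] s_def
    by (intro DERIV_divide DERIV_diff DERIV_const DERIV_chain2 [OF has_field_derivative_Arctan]
        has_field_derivative_csqrt assms)
      (use s in \<open>simp_all add: s_def\<close>)
  moreover have "((0 - inverse (1 + s ^ 2) * inverse (2 * s)) * s - N * inverse (2 * s)) / (s * s) =
      (- 1 / (1 + s ^ 2) - N / s) / (2 * s ^ 2)" for N
  proof -
    have "((0 - a * inverse (2 * s)) * s - N * inverse (2 * s)) / (s * s) =
        (- a - N / s) / (2 * s ^ 2)" for a
      using s(1) by (simp add: field_simps power2_eq_square)
    then show ?thesis
      by (simp only: inverse_eq_divide minus_divide_left)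
  qed
  ultimately show ?thesis
    by (simp only: ratio [symmetric] s(2))
qed

lemma holomorphic_on_arctan_ratio: "arctan_ratio holomorphic_on - \<real>\<^sub>\<le>\<^sub>0"
  using has_field_derivative_arctan_ratio
  unfolding holomorphic_on_def
  by (meson ComplD field_differentiable_at_within field_differentiable_def)

lemma one_plus_two_notin_nonpos_Reals:
  fixes u :: complex
  assumes "norm u < 1 / 2"
  shows "1 + 2 * u \<notin> \<real>\<^sub>\<le>\<^sub>0"
  using abs_Re_le_cmod[of u] assms by (auto simp: complex_nonpos_Reals_iff)

lemma arctan_ratio_ode:
  fixes u :: complex
  assumes "norm u < 1 / 2"
  shows "2 * (1 + u) * ((1 + 2 * u) * deriv (\<lambda>u. arctan_ratio (1 + 2 * u)) u +
    arctan_ratio (1 + 2 * u)) = - 1"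
proof -
  define a where "a = 1 + u"
  define b where "b = 1 + 2 * u"
  have nonpos: "b \<notin> \<real>\<^sub>\<le>\<^sub>0"
    unfolding b_def using assms by (rule one_plus_two_notin_nonpos_Reals)
  then have "a \<noteq> 0" and "b \<noteq> 0"
    using assms by (auto simp: a_def b_def add_eq_0_iff)
  have "((\<lambda>u. arctan_ratio (1 + 2 * u)) has_field_derivative
      (- 1 / (1 + b) - arctan_ratio b) / (2 * b) * 2) (at u)"
    unfolding b_def
    by (rule DERIV_chain2 [where g = "\<lambda>u. 1 + 2 * u",
          OF has_field_derivative_arctan_ratio [OF nonpos [unfolded b_def]]])
      (auto intro!: derivative_eq_intros)
  then have deriv: "deriv (\<lambda>u. arctan_ratio (1 + 2 * u)) u =
      (- 1 / (1 + b) - arctan_ratio b) / (2 * b) * 2"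
    by (rule DERIV_imp_deriv)
  have cancel: "b * (z / (2 * b) * 2) = z" for z
    using \<open>b \<noteq> 0\<close> by (simp add: field_simps)
  have "1 + b = 2 * a"
    by (simp add: a_def b_def)
  then have "b * deriv (\<lambda>u. arctan_ratio (1 + 2 * u)) u + arctan_ratio b = - 1 / (2 * a)"
    by (simp only: deriv cancel diff_add_cancel)
  then show ?thesis
    unfolding a_def [symmetric] b_def [symmetric] using \<open>a \<noteq> 0\<close> by simp
qed

definition arctan_ratio_coeff :: "nat \<Rightarrow> real" where
  "arctan_ratio_coeff k = - ((-1) ^ k * trig_binomial_sum k / 2 ^ k)"

lemma arctan_ratio_coeff_rec:
  "real (Suc k) * arctan_ratio_coeff (Suc k) + real (2 * k + 1) * arctan_ratio_coeff k =
    - ((-1) ^ k / 2)"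
proof -
  have "real (Suc k) * arctan_ratio_coeff (Suc k) =
      (-1) ^ k * (real (Suc k) * trig_binomial_sum (Suc k)) / 2 ^ Suc k"
    by (simp add: arctan_ratio_coeff_def)
  also have "\<dots> = (-1) ^ k * (real (4 * k + 2) * trig_binomial_sum k - 2 ^ k) / 2 ^ Suc k"
    by (simp only: trig_binomial_sum_rec)
  also have "\<dots> = - real (2 * k + 1) * arctan_ratio_coeff k - (-1) ^ k / 2"
    by (simp add: arctan_ratio_coeff_def field_simps)
  finally show ?thesis
    by (simp add: algebra_simps)
qed

lemma fps_eq_arctan_ratio_coeffs:
  fixes G :: "complex fps"
  assumes ode: "fps_const 2 * (1 + fps_X) * ((1 + fps_const 2 * fps_X) * fps_deriv G + G) = - 1"
    and "G $ 0 = 0"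
  shows "G = Abs_fps (\<lambda>k. of_real (arctan_ratio_coeff k))"
proof -
  define K where "K = (1 + fps_const 2 * fps_X) * fps_deriv G + G"
  have eq: "fps_const 2 * (K + fps_X * K) = - 1"
    using ode by (simp add: K_def algebra_simps)
  have "K $ n = - ((-1) ^ n / 2)" for n
  proof (induction n)
    case 0
    show ?case
      using arg_cong [OF eq, of "\<lambda>F. F $ 0"] by (simp add: field_simps)
  next
    case (Suc n)
    then show ?case
      using arg_cong [OF eq, of "\<lambda>F. F $ Suc n"] by (simp add: field_simps)
  qed
  moreover have "K $ n = of_nat (Suc n) * G $ Suc n + of_nat (2 * n + 1) * G $ n" for n
    by (cases n) (simp_all add: K_def algebra_simps)
  ultimately have rec: "of_nat (Suc n) * G $ Suc n = - ((-1) ^ n / 2) - of_nat (2 * n + 1) * G $ n" for n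
    by (metis add_diff_cancel_right')
  have "G $ k = of_real (arctan_ratio_coeff k)" for k
  proof (induction k)
    case 0
    then show ?case
      using \<open>G $ 0 = 0\<close> by (simp add: arctan_ratio_coeff_def)
  next
    case (Suc k)
    have "of_nat (Suc k) * G $ Suc k = of_real (real (Suc k) * arctan_ratio_coeff (Suc k))"
      unfolding rec Suc.IH using arctan_ratio_coeff_rec [of k]
      by (simp add: eq_diff_eq [symmetric])
    then show ?case
      by (metis of_nat_neq_0 of_real_mult of_real_of_nat_eq mult_left_cancel)
  qed
  then show ?thesis
    by (simp add: fps_eq_iff)
qed

lemma arctan_ratio_1 [simp]: "arctan_ratio 1 = 0"
  using Arctan_of_real [of 1] by (simp add: arctan_ratio_def)

lemma has_fps_expansion_arctan_ratio:
  "(\<lambda>u. arctan_ratio (1 + 2 * u)) has_fps_expansion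
    Abs_fps (\<lambda>k. of_real (arctan_ratio_coeff k))"
proof -
  let ?f = "\<lambda>u. arctan_ratio (1 + 2 * u)"
  have "?f holomorphic_on ball 0 (1 / 2)"
    using one_plus_two_notin_nonpos_Reals
    by (intro holomorphic_on_compose_gen [OF _ holomorphic_on_arctan_ratio, unfolded o_def])
      (auto intro: holomorphic_intros)
  then have "?f analytic_on {0}"
    by (auto simp: analytic_on_def intro!: exI [of _ "1 / 2"])
  then have G: "?f has_fps_expansion fps_expansion ?f 0"
    by (rule analytic_at_imp_has_fps_expansion_0)
  define G where "G = fps_expansion ?f 0"
  have ode: "(\<lambda>u. 2 * (1 + u) * ((1 + 2 * u) * deriv ?f u + ?f u)) has_fps_expansion
      fps_const 2 * (1 + fps_X) * ((1 + fps_const 2 * fps_X) * fps_deriv G + G)"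
    unfolding G_def by (intro fps_expansion_intros G)
  have "eventually (\<lambda>u. u \<in> ball (0 :: complex) (1 / 2)) (nhds 0)"
    by (intro eventually_nhds_in_open) auto
  then have ev: "eventually (\<lambda>u. 2 * (1 + u) * ((1 + 2 * u) * deriv ?f u + ?f u) = - 1) (nhds 0)"
    by eventually_elim (rule arctan_ratio_ode, simp)
  then have "(\<lambda>u. - 1) has_fps_expansion
      fps_const 2 * (1 + fps_X) * ((1 + fps_const 2 * fps_X) * fps_deriv G + G)"
    using ode has_fps_expansion_cong [OF ev refl] by simp
  from fps_expansion_unique_complex [OF this has_fps_expansion_const]
  have "fps_const 2 * (1 + fps_X) * ((1 + fps_const 2 * fps_X) * fps_deriv G + G) = - 1"
    by simp
  moreover have "G $ 0 = 0"
    using has_fps_expansion_imp_0_eq_fps_nth_0 [OF G] by (simp add: G_def)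
  ultimately have "G = Abs_fps (\<lambda>k. of_real (arctan_ratio_coeff k))"
    by (rule fps_eq_arctan_ratio_coeffs)
  then show ?thesis
    using G by (simp add: G_def)
qed

section \<open>Convergence for norm x < ln 2\<close>

lemma two_exp_minus_one_notin_nonpos_Reals:
  fixes x :: complex
  assumes "norm x < ln 2"
  shows "2 * exp (- x) - 1 \<notin> \<real>\<^sub>\<le>\<^sub>0"
proof
  assume "2 * exp (- x) - 1 \<in> \<real>\<^sub>\<le>\<^sub>0"
  then have re: "Re (2 * exp (- x) - 1) \<le> 0" and im: "Im (2 * exp (- x) - 1) = 0"
    by (auto simp: complex_nonpos_Reals_iff)
  have "\<bar>Im x\<bar> < pi"
    using abs_Im_le_cmod[of x] assms ln_2_less_1 pi_gt3 by linarith
  moreover have "sin (Im x) = 0"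
    using im by (simp add: Im_exp)
  ultimately have "Im x = 0"
    using sin_eq_0_pi[of "Im x"] by (auto simp: abs_less_iff)
  moreover have "exp (- Re x) > 1 / 2"
  proof -
    have "Re x < ln 2"
      using abs_Re_le_cmod[of x] assms by linarith
    then have "exp (- Re x) > exp (- ln 2)"
      by simp
    then show ?thesis
      by (simp add: exp_minus)
  qed
  ultimately show False
    using re by (simp add: Re_exp)
qed

lemma sums_compose_two_exp_minus_one:
  fixes g :: "complex \<Rightarrow> complex" and x :: complex
  assumes "g holomorphic_on - \<real>\<^sub>\<le>\<^sub>0"
    and "(\<lambda>u. g (1 + 2 * u)) has_fps_expansion F"
    and "norm x < ln 2"
  shows "(\<lambda>n. (F oo (fps_exp (-1) - 1)) $ n * x ^ n) sums g (2 * exp (- x) - 1)"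
proof -
  have "(\<lambda>x. exp (- x) - 1) has_fps_expansion fps_exp (-1) - (1 :: complex fps)"
    by (intro fps_expansion_intros)
  from has_fps_expansion_compose [OF assms(2) this]
  have "(\<lambda>x. g (2 * exp (- x) - 1)) has_fps_expansion (F oo (fps_exp (-1) - 1))"
    by (simp add: o_def algebra_simps)
  moreover have "(\<lambda>x. g (2 * exp (- x) - 1)) holomorphic_on eball 0 (ln 2)"
    using two_exp_minus_one_notin_nonpos_Reals
    by (intro holomorphic_on_compose_gen [OF _ assms(1), unfolded o_def])
      (auto intro!: holomorphic_intros)
  ultimately show ?thesis
    by (rule has_fps_expansion_imp_sums_complex) (use assms(3) in simp)
qed

lemma has_fps_expansion_inverse_csqrt:
  "(\<lambda>u. 1 / (4 * csqrt (1 + 2 * u))) has_fps_expansion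
    fps_const (1 / 4) * (fps_binomial (- 1 / 2) oo (fps_const 2 * fps_X))"
proof -
  have "(\<lambda>u::complex. 2 * u) has_fps_expansion fps_const 2 * fps_X"
    by (intro fps_expansion_intros)
  from has_fps_expansion_cmult_left [OF has_fps_expansion_compose
      [OF has_fps_expansion_binomial_complex [of "- 1 / 2"] this], of "1 / 4"]
  have "(\<lambda>u::complex. 1 / 4 * (1 + 2 * u) powr (- 1 / 2)) has_fps_expansion
      fps_const (1 / 4) * (fps_binomial (- 1 / 2) oo (fps_const 2 * fps_X))"
    by (simp add: o_def)
  moreover have "(\<lambda>u::complex. 1 / 4 * (1 + 2 * u) powr (- 1 / 2)) =
      (\<lambda>u. 1 / (4 * csqrt (1 + 2 * u)))"
  proof
    fix u :: complex
    show "1 / 4 * (1 + 2 * u) powr (- 1 / 2) = 1 / (4 * csqrt (1 + 2 * u))"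
      using powr_minus [of "1 + 2 * u" "1 / 2"] by (simp add: csqrt_conv_powr field_simps)
  qed
  ultimately show ?thesis
    by (simp only:)
qed

lemma b_coeff_eq_fps_nth:
  "complex_of_real (b_coeff n) =
    (fps_const (1 / 4) * (fps_binomial (- 1 / 2) oo (fps_const 2 * fps_X)) oo (fps_exp (-1) - 1)) $ n"
proof -
  let ?F = "fps_const (1 / 4) * (fps_binomial (- 1 / 2) oo (fps_const 2 * fps_X)) :: complex fps"
  have "?F $ k = 1 / 4 * (2 ^ k * ((- 1 / 2) gchoose k))" for k
    by simp
  then have coeff: "fact k * ?F $ k = of_real (1 / 4 * ((-1) ^ k * odd_dfact k))" for k
    using gbinomial_minus_half [of k, where 'a = complex] by (simp add: algebra_simps)
  show ?thesis
    unfolding fps_compose_exp_minus_one_nth coeff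
    by (simp add: b_coeff_def sum_distrib_left mult_ac)
qed

lemma c_coeff_eq:
  "c_coeff n =
    (-1) ^ n / fact n * (\<Sum>k = 0..n. real (Stirling n k) * (fact k * arctan_ratio_coeff k))"
proof -
  have "c_coeff n = - ((-1) ^ n / fact n) *
      (\<Sum>k = 1..n. (-1) ^ k * real (Stirling n k) * (fact k / 2 ^ k) * trig_binomial_sum k)"
    by (simp add: c_coeff_def trig_binomial_sum_def)
  also have "(\<Sum>k = 1..n. (-1) ^ k * real (Stirling n k) * (fact k / 2 ^ k) * trig_binomial_sum k) =
      - (\<Sum>k = 0..n. real (Stirling n k) * (fact k * arctan_ratio_coeff k))"
    by (subst sum.atLeast_Suc_atMost [of 0]) (simp_all add: arctan_ratio_coeff_def sum_negf mult_ac)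
  finally show ?thesis
    by simp
qed

lemma c_coeff_eq_fps_nth:
  "complex_of_real (c_coeff n) =
    (Abs_fps (\<lambda>k. of_real (arctan_ratio_coeff k)) oo (fps_exp (-1) - 1)) $ n"
  by (simp add: c_coeff_eq fps_compose_exp_minus_one_nth)

theorem theorem6p1:
  fixes x :: complex
  assumes "norm x < ln 2"
  shows "(\<lambda>n. complex_of_real (b_coeff n) * x ^ n) sums
           (1 / (4 * csqrt (2 * exp (- x) - 1))) \<and>
         (\<lambda>n. complex_of_real (c_coeff n) * x ^ n) sums
           ((of_real pi / 4 - Arctan (csqrt (2 * exp (- x) - 1))) / csqrt (2 * exp (- x) - 1))"
proof
  have "(\<lambda>y. 1 / (4 * csqrt y)) holomorphic_on - \<real>\<^sub>\<le>\<^sub>0"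
    by (intro holomorphic_intros) auto
  from sums_compose_two_exp_minus_one [OF this has_fps_expansion_inverse_csqrt assms]
  show "(\<lambda>n. complex_of_real (b_coeff n) * x ^ n) sums (1 / (4 * csqrt (2 * exp (- x) - 1)))"
    by (simp only: b_coeff_eq_fps_nth)
next
  from sums_compose_two_exp_minus_one
    [OF holomorphic_on_arctan_ratio has_fps_expansion_arctan_ratio assms]
  show "(\<lambda>n. complex_of_real (c_coeff n) * x ^ n) sums
      ((of_real pi / 4 - Arctan (csqrt (2 * exp (- x) - 1))) / csqrt (2 * exp (- x) - 1))"
    by (simp only: c_coeff_eq_fps_nth arctan_ratio_def)
qed

end
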